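(* Let $\phi$ be the monoid endomorphism of $\{1,-1\}^*$ determined by $\phi(1)=1\,1\,(-1)$ and $\phi(-1)=1\,(-1)\,(-1)$, and let $w_\alpha=\lim_{n\to\infty}\phi^n(1)$ be the infinite sequence over $\{1,-1\}$ obtained by iterating $\phi$ starting from the word $1$ (each $\phi^n(1)$ is a prefix of $\phi^{n+1}(1)$). Then $w_\alpha$ is cube-free, i.e. it contains no factor of the form $uuu$ with $u$ a nonempty finite word. *)

theory Defs
  imports Main
begin

text \<open>Finite words over the alphabet {1,-1} are represented as int lists.\<close>

fun phi_letter :: "int \<Rightarrow> int list" where
  "phi_letter a = (if a = 1 then [1, 1, -1] else [1, -1, -1])"

definition phi :: "int list \<Rightarrow> int list" where
  "phi xs = concat (map phi_letter xs)"

text \<open>Since phi^n(1) has length 3^n > i for n = i+1 and each phi^n(1) is a prefix of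
  phi^(n+1)(1), the i-th letter of the limit is the i-th letter of phi^(i+1)(1).\<close>
definition w_alpha :: "nat \<Rightarrow> int" where
  "w_alpha i = ((phi ^^ (Suc i)) [1]) ! i"

definition cube_free :: "(nat \<Rightarrow> 'a) \<Rightarrow> bool" where
  "cube_free w \<longleftrightarrow> \<not> (\<exists>i m. m > 0 \<and>
      (\<forall>k<m. w (i + k) = w (i + m + k) \<and> w (i + k) = w (i + 2 * m + k)))"

end

theory Submission
  imports Defs
begin

text \<open>The word w = w_alpha is the fixed point of phi, so w(3i) = 1, w(3i+2) = -1 and
  w(3i+1) = w(i). A cube uuu whose period |u| is not divisible by 3 would force the three
  letters at distance |u| apart, which meet every residue class mod 3, to be both 1 and -1.
  A cube of period 3m contains, at the positions congruent to 1 mod 3, the image of a cube of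
  period m under i \<mapsto> 3i+1; so by descent there is no cube at all.\<close>

lemma phi_append: "phi (xs @ ys) = phi xs @ phi ys"
  by (simp add: phi_def)

lemma length_phi_letter [simp]: "length (phi_letter a) = 3"
  by simp

lemma length_phi: "length (phi xs) = 3 * length xs"
  by (induction xs) (simp_all add: phi_def del: phi_letter.simps)

lemma nth_phi:
  assumes "i < length xs" and "r < 3"
  shows "phi xs ! (3 * i + r) = phi_letter (xs ! i) ! r"
  using assms
proof (induction xs arbitrary: i)
  case Nil
  then show ?case by simp
next
  case (Cons x xs)
  have phi_Cons: "phi (x # xs) = phi_letter x @ phi xs"
    by (simp add: phi_def)
  show ?case
  proof (cases i)
    case 0
    with Cons.prems show ?thesis
      by (simp add: phi_Cons nth_append del: phi_letter.simps)
  next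
    case (Suc j)
    then have "3 * i + r = (3 * j + r) + 3" by simp
    then have "phi (x # xs) ! (3 * i + r) = phi xs ! (3 * j + r)"
      by (simp add: phi_Cons nth_append del: phi_letter.simps)
    with Cons Suc show ?thesis by simp
  qed
qed

lemma funpow_phi_append: "(phi ^^ n) (xs @ ys) = (phi ^^ n) xs @ (phi ^^ n) ys"
  by (induction n) (simp_all add: phi_append)

lemma length_funpow_phi: "length ((phi ^^ n) xs) = 3 ^ n * length xs"
  by (induction n) (simp_all add: length_phi)

lemma funpow_phi_Suc_one: "(phi ^^ Suc n) [1] = (phi ^^ n) [1] @ (phi ^^ n) [1, -1]"
proof -
  have "phi [1] = [1] @ [1, -1]"
    by (simp add: phi_def)
  then show ?thesis
    by (simp only: funpow_Suc_right o_apply funpow_phi_append)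
qed

lemma nth_funpow_phi_one_mono:
  assumes "n \<le> m" and "i < 3 ^ n"
  shows "(phi ^^ m) [1] ! i = (phi ^^ n) [1] ! i"
  using assms(1)
proof (induction m rule: dec_induct)
  case base
  then show ?case by simp
next
  case (step m)
  have "i < 3 ^ m"
    using assms(2) power_increasing[OF step.hyps(1), where a = "3::nat"] by (simp add: less_le_trans)
  with step.IH show ?case
    by (simp add: funpow_phi_Suc_one nth_append length_funpow_phi del: funpow.simps)
qed

lemma less_three_power: "i < (3::nat) ^ i"
  by (induction i) simp_all

lemma w_alpha_eq_nth_funpow_phi:
  assumes "i < 3 ^ n"
  shows "w_alpha i = (phi ^^ n) [1] ! i"
proof -
  have "i < 3 ^ Suc i"
    using less_three_power[of i] by simp
  then show ?thesis
    using assms nth_funpow_phi_one_mono[of "Suc i" n i] nth_funpow_phi_one_mono[of n "Suc i" i]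
    unfolding w_alpha_def by (cases "Suc i \<le> n") simp_all
qed

lemma w_alpha_three_mul_add:
  assumes "r < 3"
  shows "w_alpha (3 * i + r) = phi_letter (w_alpha i) ! r"
proof -
  let ?xs = "(phi ^^ Suc i) [1]"
  have i: "i < 3 ^ Suc i"
    using less_three_power[of i] by simp
  then have "3 * i + r < 3 ^ Suc (Suc i)"
    using assms by simp
  then have "w_alpha (3 * i + r) = (phi ^^ Suc (Suc i)) [1] ! (3 * i + r)"
    by (rule w_alpha_eq_nth_funpow_phi)
  also have "\<dots> = phi ?xs ! (3 * i + r)"
    by (simp only: funpow.simps(2) o_apply)
  also have "\<dots> = phi_letter (?xs ! i) ! r"
    using i assms by (simp add: nth_phi length_funpow_phi del: funpow.simps phi_letter.simps)
  finally show ?thesis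
    using w_alpha_eq_nth_funpow_phi[OF i] by simp
qed

lemma w_alpha_range: "w_alpha j \<in> {1, -1}"
proof -
  have "j = 3 * (j div 3) + j mod 3" by simp
  then have "w_alpha j = phi_letter (w_alpha (j div 3)) ! (j mod 3)"
    by (metis w_alpha_three_mul_add mod_less_divisor zero_less_numeral)
  also have "\<dots> \<in> set (phi_letter (w_alpha (j div 3)))"
    by (rule nth_mem) simp
  finally show ?thesis
    by (auto split: if_splits)
qed

lemma w_alpha_three_mul: "w_alpha (3 * i) = 1"
  using w_alpha_three_mul_add[of 0 i] by simp

lemma w_alpha_three_mul_plus_two: "w_alpha (3 * i + 2) = -1"
  using w_alpha_three_mul_add[of 2 i] by simp

lemma w_alpha_three_mul_plus_one: "w_alpha (3 * i + 1) = w_alpha i"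
  using w_alpha_three_mul_add[of 1 i] w_alpha_range[of i] by auto

definition cube_at :: "(nat \<Rightarrow> 'a) \<Rightarrow> nat \<Rightarrow> nat \<Rightarrow> bool" where
  "cube_at w i m \<longleftrightarrow> (\<forall>k<m. w (i + k) = w (i + m + k) \<and> w (i + k) = w (i + 2 * m + k))"

lemma cube_free_iff_no_cube_at: "cube_free w \<longleftrightarrow> (\<forall>i m. 0 < m \<longrightarrow> \<not> cube_at w i m)"
  unfolding cube_free_def cube_at_def by blast

lemma no_cube_at_period_not_dvd_three:
  assumes "\<And>j. w (3 * j) = a" and "\<And>j. w (3 * j + 2) = b" and "a \<noteq> b"
    and "\<not> 3 dvd m"
  shows "\<not> cube_at w i m"
proof
  assume "cube_at w i m"
  moreover have "0 < m"
    using \<open>\<not> 3 dvd m\<close> by (rule contrapos_np) simp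
  ultimately have same: "w (i + m) = w i" "w (i + 2 * m) = w i"
    unfolding cube_at_def by (metis add_0_right)+
  have "i mod 3 = 0 \<or> (i + m) mod 3 = 0 \<or> (i + 2 * m) mod 3 = 0"
    using \<open>\<not> 3 dvd m\<close> by presburger
  then have "w i = a"
    using same assms(1) by (metis mult_div_mod_eq add_0_right)
  moreover have "i mod 3 = 2 \<or> (i + m) mod 3 = 2 \<or> (i + 2 * m) mod 3 = 2"
    using \<open>\<not> 3 dvd m\<close> by presburger
  then have "w i = b"
    using same assms(2) by (metis mult_div_mod_eq)
  ultimately show False
    using \<open>a \<noteq> b\<close> by simp
qed

text \<open>The positions 3q+1, ..., 3(q+m-1)+1 with q = (i+1) div 3 lie inside the first block
  of the cube.\<close>

lemma cube_at_three_mul_period: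
  assumes "\<And>j. w (3 * j + 1) = w j" and "cube_at w i (3 * m)"
  shows "cube_at w ((i + 1) div 3) m"
  unfolding cube_at_def
proof (intro allI impI)
  fix k
  assume "k < m"
  define q where "q = (i + 1) div 3"
  define d where "d = 3 * q + 1 + 3 * k - i"
  have d: "d < 3 * m" "3 * (q + k) + 1 = i + d"
    using \<open>k < m\<close> unfolding d_def q_def by presburger+
  then have "3 * (q + m + k) + 1 = i + 3 * m + d" "3 * (q + 2 * m + k) + 1 = i + 2 * (3 * m) + d"
    by simp_all
  with d assms show "w (q + k) = w (q + m + k) \<and> w (q + k) = w (q + 2 * m + k)"
    unfolding cube_at_def by metis
qed

lemma cube_free_triadic_fixpoint:
  assumes "\<And>j. w (3 * j) = a" and "\<And>j. w (3 * j + 1) = w j" and "\<And>j. w (3 * j + 2) = b"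
    and "a \<noteq> b"
  shows "cube_free w"
proof -
  have "\<not> cube_at w i m" if "0 < m" for i m
    using that
  proof (induction m arbitrary: i rule: less_induct)
    case (less m)
    show ?case
    proof (cases "3 dvd m")
      case True
      then obtain m' where "m = 3 * m'" ..
      with less.prems less.IH[of m' "(i + 1) div 3"] show ?thesis
        using cube_at_three_mul_period[of w, OF assms(2)] by auto
    next
      case False
      with assms(1,3,4) show ?thesis
        by (rule no_cube_at_period_not_dvd_three)
    qed
  qed
  then show ?thesis
    by (simp add: cube_free_iff_no_cube_at)
qed

theorem mainTheorem2:
  shows "cube_free w_alpha"
  using w_alpha_three_mul w_alpha_three_mul_plus_one w_alpha_three_mul_plus_two
  by (rule cube_free_triadic_fixpoint) simp

end
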